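(* Let $\mathbf v\in\mathbb R^{n\times m}_{<0}$, $\mathbf b\in\mathbb R^n_{<0}$, $\mathbf u\in\mathbb R^n_{<0}$, and $\tau=\tau(\mathbf u,\mathbf b)=(b_i/u_i)_{i\in[n]}$. Then $\mathbf u$ is a competitive utility profile for $(\mathbf v,\mathbf b)$ if and only if there exists an allocation $\mathbf z$ with $\mathbf u(\mathbf z)=\mathbf u$ and $G_{\mathbf z}$ a subgraph of $G_\tau(\mathbf v)$. Moreover, the set of all such $\mathbf z$ coincides with the set of competitive allocations $\mathbf z$ for $(\mathbf v,\mathbf b)$ with $\mathbf u(\mathbf z)=\mathbf u$.
   Context: Setup: agents $[n]$, chores $[m]$, allocations $\mathbf z\in\mathbb R^{n\times m}_{\ge0}$ with column sums $1$, $u_i(\mathbf z_i)=\sum_jv_{i,j}z_{i,j}$. Competitive allocation for budgets $\mathbf b$: there exist prices $\mathbf p\in\mathbb R^m_{<0}$ such that each $\mathbf z_i$ maximizes $u_i$ over bundles $\mathbf x\in\mathbb R^m_{\ge0}$ with $\sum_jp_jx_j\le b_i$; a competitive utility profile is $\mathbf u(\mathbf z)$ for such $\mathbf z$. $G_{\mathbf z}$: edge $(i,j)$ iff $z_{i,j}>0$. For $\tau\in\mathbb R^n_{>0}$, $G_\tau(\mathbf v)$: edge $(i,j)$ iff $\tau_i|v_{i,j}|\le\tau_{i'}|v_{i',j}|$ for all $i'$. *)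

theory Defs
  imports Complex_Main
begin

text \<open>Agents are 0..<n, chores are 0..<m. Matrices are functions nat => nat => real,
  only their entries with i < n, j < m are relevant.\<close>

definition allocation :: "nat \<Rightarrow> nat \<Rightarrow> (nat \<Rightarrow> nat \<Rightarrow> real) \<Rightarrow> bool" where
  "allocation n m z \<longleftrightarrow>
     (\<forall>i<n. \<forall>j<m. z i j \<ge> 0) \<and> (\<forall>j<m. (\<Sum>i<n. z i j) = 1)"

definition util :: "nat \<Rightarrow> (nat \<Rightarrow> nat \<Rightarrow> real) \<Rightarrow> nat \<Rightarrow> (nat \<Rightarrow> real) \<Rightarrow> real" where
  "util m v i x = (\<Sum>j<m. v i j * x j)"

definition competitive_with_prices ::
  "nat \<Rightarrow> nat \<Rightarrow> (nat \<Rightarrow> nat \<Rightarrow> real) \<Rightarrow> (nat \<Rightarrow> real) \<Rightarrow> (nat \<Rightarrow> nat \<Rightarrow> real) \<Rightarrow> (nat \<Rightarrow> real) \<Rightarrow> bool" where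
  "competitive_with_prices n m v b z p \<longleftrightarrow>
     allocation n m z \<and> (\<forall>j<m. p j < 0) \<and>
     (\<forall>i<n. (\<Sum>j<m. p j * z i j) \<le> b i \<and>
        (\<forall>x. (\<forall>j<m. x j \<ge> 0) \<longrightarrow> (\<Sum>j<m. p j * x j) \<le> b i \<longrightarrow>
              util m v i x \<le> util m v i (z i)))"

definition competitive_allocation ::
  "nat \<Rightarrow> nat \<Rightarrow> (nat \<Rightarrow> nat \<Rightarrow> real) \<Rightarrow> (nat \<Rightarrow> real) \<Rightarrow> (nat \<Rightarrow> nat \<Rightarrow> real) \<Rightarrow> bool" where
  "competitive_allocation n m v b z \<longleftrightarrow> (\<exists>p. competitive_with_prices n m v b z p)"

definition competitive_utility_profile ::
  "nat \<Rightarrow> nat \<Rightarrow> (nat \<Rightarrow> nat \<Rightarrow> real) \<Rightarrow> (nat \<Rightarrow> real) \<Rightarrow> (nat \<Rightarrow> real) \<Rightarrow> bool" where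
  "competitive_utility_profile n m v b u \<longleftrightarrow>
     (\<exists>z. competitive_allocation n m v b z \<and> (\<forall>i<n. util m v i (z i) = u i))"

definition alloc_edge :: "(nat \<Rightarrow> nat \<Rightarrow> real) \<Rightarrow> nat \<Rightarrow> nat \<Rightarrow> bool" where
  "alloc_edge z i j \<longleftrightarrow> z i j > 0"

definition tau_edge :: "nat \<Rightarrow> (nat \<Rightarrow> real) \<Rightarrow> (nat \<Rightarrow> nat \<Rightarrow> real) \<Rightarrow> nat \<Rightarrow> nat \<Rightarrow> bool" where
  "tau_edge n \<tau> v i j \<longleftrightarrow> (\<forall>i'<n. \<tau> i * \<bar>v i j\<bar> \<le> \<tau> i' * \<bar>v i' j\<bar>)"

definition subgraph_of_tau :: "nat \<Rightarrow> nat \<Rightarrow> (nat \<Rightarrow> nat \<Rightarrow> real) \<Rightarrow> (nat \<Rightarrow> real) \<Rightarrow> (nat \<Rightarrow> nat \<Rightarrow> real) \<Rightarrow> bool" where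
  "subgraph_of_tau n m z \<tau> v \<longleftrightarrow> (\<forall>i<n. \<forall>j<m. alloc_edge z i j \<longrightarrow> tau_edge n \<tau> v i j)"

end

theory Submission
  imports Defs
begin

text \<open>Put \<open>\<tau>\<^sub>i = b\<^sub>i / u\<^sub>i > 0\<close>. If \<open>z\<close> is competitive at prices \<open>p\<close>, agent \<open>i\<close> could spend
  her whole budget on chore \<open>k\<close> alone, so optimality gives \<open>\<tau>\<^sub>i v\<^sub>i\<^sub>k \<le> p\<^sub>k\<close> for every \<open>k\<close>;
  as \<open>\<Sum>\<^sub>k \<tau>\<^sub>i v\<^sub>i\<^sub>k z\<^sub>i\<^sub>k = b\<^sub>i \<ge> \<Sum>\<^sub>k p\<^sub>k z\<^sub>i\<^sub>k\<close>, equality \<open>p\<^sub>j = \<tau>\<^sub>i v\<^sub>i\<^sub>j\<close> must hold wherever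
  \<open>z\<^sub>i\<^sub>j > 0\<close>, i.e. \<open>G\<^sub>z \<subseteq> G\<^sub>\<tau>(v)\<close> and \<open>p\<^sub>j = max\<^sub>i \<tau>\<^sub>i v\<^sub>i\<^sub>j\<close>. Conversely, if \<open>G\<^sub>z \<subseteq> G\<^sub>\<tau>(v)\<close>,
  the prices \<open>p\<^sub>j = max\<^sub>i \<tau>\<^sub>i v\<^sub>i\<^sub>j\<close> make every bundle \<open>z\<^sub>i\<close> cost exactly \<open>b\<^sub>i\<close>, and
  \<open>\<tau>\<^sub>i v\<^sub>i \<le> p\<close> shows that no affordable bundle gives agent \<open>i\<close> more than \<open>u\<^sub>i\<close>.\<close>

lemma sum_mono_eq_on_support:
  fixes f g w :: "'a \<Rightarrow> real"
  assumes "finite A" and "\<And>k. k \<in> A \<Longrightarrow> f k \<le> g k" and "\<And>k. k \<in> A \<Longrightarrow> w k \<ge> 0"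
    and "(\<Sum>k\<in>A. g k * w k) \<le> (\<Sum>k\<in>A. f k * w k)"
    and "k \<in> A" and "w k > 0"
  shows "f k = g k"
proof -
  have nonneg: "\<forall>k\<in>A. 0 \<le> (g k - f k) * w k" using assms(2,3) by simp
  have "(\<Sum>k\<in>A. (g k - f k) * w k) \<le> 0"
    using assms(4) by (simp add: left_diff_distrib sum_subtractf)
  with nonneg have "(\<Sum>k\<in>A. (g k - f k) * w k) = 0" by (meson antisym sum_nonneg)
  with nonneg \<open>finite A\<close> have "(g k - f k) * w k = 0" using \<open>k \<in> A\<close> by (simp add: sum_nonneg_eq_0_iff)
  with \<open>w k > 0\<close> show ?thesis by simp
qed

lemma allocation_agents_nonempty:
  assumes "allocation n m z" and "j < m"
  shows "0 < n"
  using assms unfolding allocation_def by (metis lessThan_0 not_gr_zero sum.empty zero_neq_one)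

lemma scaled_util_le_cost:
  assumes "\<forall>j<m. t * v i j \<le> p j" and "\<forall>j<m. x j \<ge> 0"
  shows "t * util m v i x \<le> (\<Sum>j<m. p j * x j)"
  unfolding util_def sum_distrib_left
  using assms by (intro sum_mono) (simp add: mult.assoc[symmetric] mult_right_mono)

lemma tau_edge_iff:
  assumes "v i j \<le> 0" and "\<forall>i'<n. v i' j \<le> 0"
  shows "tau_edge n \<tau> v i j \<longleftrightarrow> (\<forall>i'<n. \<tau> i' * v i' j \<le> \<tau> i * v i j)"
  using assms by (auto simp: tau_edge_def abs_of_nonpos)

lemma competitive_single_chore_bound:
  assumes "competitive_with_prices n m v b z p" and "i < n" and "k < m" and "b i \<le> 0"
  shows "util m v i (z i) * p k \<le> v i k * b i"
proof -
  have pk: "p k < 0" using assms(1,3) by (simp add: competitive_with_prices_def)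
  define x where "x = (\<lambda>j. if j = k then b i / p k else 0)"
  have "\<forall>j<m. x j \<ge> 0" using pk \<open>b i \<le> 0\<close> by (simp add: x_def divide_nonpos_neg)
  moreover have "(\<Sum>j<m. p j * x j) = b i" using pk \<open>k < m\<close> by (simp add: x_def if_distrib cong: if_cong)
  ultimately have "util m v i x \<le> util m v i (z i)"
    using assms(1,2) by (simp add: competitive_with_prices_def)
  moreover have "util m v i x = v i k * b i / p k"
    using \<open>k < m\<close> by (simp add: util_def x_def if_distrib cong: if_cong)
  ultimately show ?thesis using pk by (simp add: neg_divide_le_eq mult.commute)
qed

lemma competitive_scaled_value_le_price:
  assumes "competitive_with_prices n m v b z p" and "i < n" and "k < m"
    and "b i < 0" and "util m v i (z i) < 0"
  shows "b i / util m v i (z i) * v i k \<le> p k"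
  using competitive_single_chore_bound[OF assms(1-3)] assms(4,5)
  by (simp add: neg_divide_le_eq mult.commute)

lemma competitive_price_eq_on_support:
  assumes c: "competitive_with_prices n m v b z p" and "i < n" and "j < m" and "z i j > 0"
    and "b i < 0" and "util m v i (z i) < 0"
  shows "p j = b i / util m v i (z i) * v i j"
proof -
  define t where "t = b i / util m v i (z i)"
  have "(\<Sum>k<m. p k * z i k) \<le> b i"
    using c \<open>i < n\<close> by (simp add: competitive_with_prices_def)
  also have "b i = t * util m v i (z i)" using assms(6) by (simp add: t_def)
  also have "\<dots> = (\<Sum>k<m. t * v i k * z i k)" by (simp add: util_def sum_distrib_left mult.assoc)
  finally show ?thesis unfolding t_def
    using competitive_scaled_value_le_price[OF c \<open>i < n\<close> _ assms(5,6)] c \<open>i < n\<close> assms(3,4)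
    by (intro sum_mono_eq_on_support[where A = "{..<m}" and w = "z i", symmetric])
       (auto simp: competitive_with_prices_def allocation_def t_def)
qed

lemma competitive_imp_subgraph_of_tau:
  assumes v: "\<forall>i<n. \<forall>j<m. v i j < 0" and b: "\<forall>i<n. b i < 0" and u: "\<forall>i<n. u i < 0"
    and c: "competitive_with_prices n m v b z p" and uz: "\<forall>i<n. util m v i (z i) = u i"
  shows "subgraph_of_tau n m z (\<lambda>i. b i / u i) v"
  unfolding subgraph_of_tau_def alloc_edge_def
proof (intro allI impI)
  fix i j assume "i < n" "j < m" "0 < z i j"
  have "p j = b i / u i * v i j"
    using competitive_price_eq_on_support[OF c \<open>i < n\<close> \<open>j < m\<close> \<open>0 < z i j\<close>] b u uz \<open>i < n\<close>
    by simp
  moreover have "\<forall>i'<n. b i' / u i' * v i' j \<le> p j"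
    using competitive_scaled_value_le_price[OF c _ \<open>j < m\<close>] b u uz by simp
  ultimately show "tau_edge n (\<lambda>i. b i / u i) v i j"
    using v \<open>i < n\<close> \<open>j < m\<close> by (simp add: tau_edge_iff less_imp_le)
qed

definition tau_price :: "nat \<Rightarrow> (nat \<Rightarrow> real) \<Rightarrow> (nat \<Rightarrow> nat \<Rightarrow> real) \<Rightarrow> nat \<Rightarrow> real" where
  "tau_price n \<tau> v j = Max ((\<lambda>i. \<tau> i * v i j) ` {..<n})"

lemma tau_price_ge: "i < n \<Longrightarrow> \<tau> i * v i j \<le> tau_price n \<tau> v j"
  unfolding tau_price_def by (intro Max_ge) auto

lemma tau_price_eqI:
  assumes "i < n" and "\<forall>i'<n. \<tau> i' * v i' j \<le> \<tau> i * v i j"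
  shows "tau_price n \<tau> v j = \<tau> i * v i j"
  unfolding tau_price_def using assms by (intro Max_eqI) auto

lemma tau_price_neg:
  assumes "0 < n" and "\<forall>i<n. \<tau> i > 0 \<and> v i j < 0"
  shows "tau_price n \<tau> v j < 0"
proof -
  have "tau_price n \<tau> v j \<in> (\<lambda>i. \<tau> i * v i j) ` {..<n}"
    unfolding tau_price_def using \<open>0 < n\<close> by (intro Max_in) auto
  then show ?thesis using assms(2) by (auto simp: mult_pos_neg)
qed

lemma subgraph_of_tau_imp_competitive:
  assumes v: "\<forall>i<n. \<forall>j<m. v i j < 0"
    and al: "allocation n m z" and uz: "\<forall>i<n. util m v i (z i) = u i"
    and sg: "subgraph_of_tau n m z \<tau> v"
    and \<tau>_pos: "\<forall>i<n. \<tau> i > 0" and \<tau>_u: "\<forall>i<n. \<tau> i * u i = b i"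
  shows "competitive_with_prices n m v b z (tau_price n \<tau> v)"
proof -
  let ?p = "tau_price n \<tau> v"
  have z_nonneg: "z i j \<ge> 0" if "i < n" "j < m" for i j using al that by (simp add: allocation_def)
  have support: "?p j * z i j = \<tau> i * v i j * z i j" if "i < n" "j < m" for i j
  proof (cases "z i j > 0")
    case True
    with sg that have "tau_edge n \<tau> v i j" by (simp add: subgraph_of_tau_def alloc_edge_def)
    with v that have "?p j = \<tau> i * v i j" by (simp add: tau_price_eqI tau_edge_iff less_imp_le)
    then show ?thesis by simp
  qed (use z_nonneg[OF that] in simp)
  have cost: "(\<Sum>j<m. ?p j * z i j) = b i" if "i < n" for i
  proof -
    have "(\<Sum>j<m. ?p j * z i j) = (\<Sum>j<m. \<tau> i * v i j * z i j)"
      using support that by (intro sum.cong) auto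
    also have "\<dots> = \<tau> i * util m v i (z i)"
      by (simp add: util_def sum_distrib_left mult.assoc)
    also have "\<dots> = b i" using \<tau>_u uz that by simp
    finally show ?thesis .
  qed
  have optimal: "util m v i x \<le> util m v i (z i)"
    if "i < n" and "\<forall>j<m. x j \<ge> 0" and "(\<Sum>j<m. ?p j * x j) \<le> b i" for i x
  proof -
    have "\<tau> i * util m v i x \<le> (\<Sum>j<m. ?p j * x j)"
      using \<open>i < n\<close> \<open>\<forall>j<m. x j \<ge> 0\<close> by (intro scaled_util_le_cost) (simp add: tau_price_ge)
    also have "\<dots> \<le> \<tau> i * util m v i (z i)" using that \<tau>_u uz by simp
    finally show ?thesis using \<tau>_pos \<open>i < n\<close> by simp
  qed
  have "?p j < 0" if "j < m" for j
    using tau_price_neg allocation_agents_nonempty[OF al that] \<tau>_pos v that by blast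
  then show ?thesis using al cost optimal by (simp add: competitive_with_prices_def)
qed

theorem corollary5:
  fixes n m :: nat and v :: "nat \<Rightarrow> nat \<Rightarrow> real" and b u :: "nat \<Rightarrow> real"
  assumes "\<forall>i<n. \<forall>j<m. v i j < 0"
    and "\<forall>i<n. b i < 0"
    and "\<forall>i<n. u i < 0"
  defines "\<tau> \<equiv> (\<lambda>i. b i / u i)"
  shows "(competitive_utility_profile n m v b u \<longleftrightarrow>
           (\<exists>z. allocation n m z \<and> (\<forall>i<n. util m v i (z i) = u i) \<and> subgraph_of_tau n m z \<tau> v))
       \<and> (\<forall>z. (allocation n m z \<and> (\<forall>i<n. util m v i (z i) = u i) \<and> subgraph_of_tau n m z \<tau> v)
               \<longleftrightarrow> (competitive_allocation n m v b z \<and> (\<forall>i<n. util m v i (z i) = u i)))"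
proof -
  have \<tau>_pos: "\<forall>i<n. \<tau> i > 0" and \<tau>_u: "\<forall>i<n. \<tau> i * u i = b i"
    using assms(2,3) by (auto simp: \<tau>_def divide_neg_neg)
  have characterization:
    "(allocation n m z \<and> (\<forall>i<n. util m v i (z i) = u i) \<and> subgraph_of_tau n m z \<tau> v)
       \<longleftrightarrow> (competitive_allocation n m v b z \<and> (\<forall>i<n. util m v i (z i) = u i))" for z
  proof
    assume "allocation n m z \<and> (\<forall>i<n. util m v i (z i) = u i) \<and> subgraph_of_tau n m z \<tau> v"
    then show "competitive_allocation n m v b z \<and> (\<forall>i<n. util m v i (z i) = u i)"
      using subgraph_of_tau_imp_competitive[OF assms(1) _ _ _ \<tau>_pos \<tau>_u]
      unfolding competitive_allocation_def by blast
  next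
    assume "competitive_allocation n m v b z \<and> (\<forall>i<n. util m v i (z i) = u i)"
    then obtain p where "competitive_with_prices n m v b z p" and "\<forall>i<n. util m v i (z i) = u i"
      unfolding competitive_allocation_def by blast
    then show "allocation n m z \<and> (\<forall>i<n. util m v i (z i) = u i) \<and> subgraph_of_tau n m z \<tau> v"
      using competitive_imp_subgraph_of_tau[OF assms(1-3)]
      unfolding competitive_with_prices_def \<tau>_def by blast
  qed
  then show ?thesis unfolding competitive_utility_profile_def by blast
qed

end
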